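(* Let $\alpha,\beta\in\mathbb F_q^*$. For nonempty words $\mathfrak a,\mathfrak b\in\langle\Sigma\rangle$, $\varphi_\alpha(\mathfrak a)\diamond\varphi_\beta(\mathfrak b)=\varphi_{\alpha\beta}(\mathfrak a\diamond\mathfrak b)$; and for nonempty words $\mathfrak a,\mathfrak b\in\langle\Gamma\rangle$, also $\varphi_\alpha(\mathfrak a)\diamond\varphi_\beta(\mathfrak b)=\varphi_{\alpha\beta}(\mathfrak a\diamond\mathfrak b)$.
   Context: Let $q$ be a prime power. For positive integers $r,s,j$ put $\Delta^j_{r,s}=(-1)^{r-1}\binom{j-1}{r-1}+(-1)^{s-1}\binom{j-1}{s-1}$ if $(q-1)\mid j$ and $0$ otherwise. Let $\Sigma=\{x_n\}_{n\in\mathbb N}$ and $\Gamma=\{x_{n,\varepsilon}\}_{n\in\mathbb N,\varepsilon\in\mathbb F_q^*}$ be alphabets, $\langle\Sigma\rangle,\langle\Gamma\rangle$ their sets of words (empty word $1$, juxtaposition = concatenation), and $\mathfrak C$, $\mathfrak D$ the $\mathbb F_q$-vector spaces with bases $\langle\Sigma\rangle$, $\langle\Gamma\rangle$. A word of $\langle\Sigma\rangle$ is identified with the word of $\langle\Gamma\rangle$ obtained by giving every letter character $1$ ($x_n\leftrightarrow x_{n,1}$). On $\mathfrak D$ bilinear products are defined recursively by $1\diamond\mathfrak a=\mathfrak a\diamond1=\mathfrak a$, $1\sqcup\!\sqcup\mathfrak a=\mathfrak a\sqcup\!\sqcup1=\mathfrak a$ and, for nonempty $\mathfrak a=x_{a,\alpha}\mathfrak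 a_-$, $\mathfrak b=x_{b,\beta}\mathfrak b_-$: $\mathfrak a\diamond\mathfrak b=x_{a+b,\alpha\beta}(\mathfrak a_-\sqcup\!\sqcup\mathfrak b_-)+\sum_{i+j=a+b}\Delta^j_{a,b}x_{i,\alpha\beta}(x_{j,1}\sqcup\!\sqcup(\mathfrak a_-\sqcup\!\sqcup\mathfrak b_-))$, $\mathfrak a\sqcup\!\sqcup\mathfrak b=x_{a,\alpha}(\mathfrak a_-\sqcup\!\sqcup\mathfrak b)+x_{b,\beta}(\mathfrak a\sqcup\!\sqcup\mathfrak b_-)+\mathfrak a\diamond\mathfrak b$; on $\mathfrak C$ by the same recursion without characters. For $\alpha\in\mathbb F_q^*$, the horizontal map $\varphi_\alpha:\mathfrak C\to\mathfrak D$ is linear with $\varphi_\alpha(1)=1$, $\varphi_\alpha(x_{i_1}x_{i_2}\cdots x_{i_n})=x_{i_1,\alpha}x_{i_2,1}\cdots x_{i_n,1}$; it is extended to $\varphi_\alpha:\mathfrak D\to\mathfrak D$ by $\varphi_\alpha(1)=1$ and $\varphi_\alpha(x_{u,\varepsilon}\mathfrak u_-)=x_{u,\alpha\varepsilon}\mathfrak u_-$. *)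

theory Defs
  imports Main "HOL-Library.Poly_Mapping"
begin

text \<open>The field F_q is modelled by a type 'k of class {finite, field}; q = card (UNIV :: 'k set).
  Words over Gamma: lists of letters (n, eps) :: nat * 'k; words over Sigma: lists of nat.
  The vector spaces C, D: finitely supported maps words =>0 'k.\<close>

type_synonym 'k gword = "(nat \<times> 'k) list"
type_synonym 'k dvec = "'k gword \<Rightarrow>\<^sub>0 'k"
type_synonym 'k cvec = "nat list \<Rightarrow>\<^sub>0 'k"

definition smul :: "'k::field \<Rightarrow> ('w \<Rightarrow>\<^sub>0 'k) \<Rightarrow> ('w \<Rightarrow>\<^sub>0 'k)" where
  "smul c v = Poly_Mapping.map (\<lambda>x. c * x) v"

definition linext :: "('w \<Rightarrow> ('u \<Rightarrow>\<^sub>0 'k::field)) \<Rightarrow> ('w \<Rightarrow>\<^sub>0 'k) \<Rightarrow> ('u \<Rightarrow>\<^sub>0 'k)" where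
  "linext f v = (\<Sum>w\<in>Poly_Mapping.keys v. smul (Poly_Mapping.lookup v w) (f w))"

definition bw :: "'w \<Rightarrow> ('w \<Rightarrow>\<^sub>0 'k::field)" where
  "bw w = Poly_Mapping.single w 1"

definition prefix :: "'l \<Rightarrow> ('l list \<Rightarrow>\<^sub>0 'k::field) \<Rightarrow> ('l list \<Rightarrow>\<^sub>0 'k)" where
  "prefix x v = linext (\<lambda>w. bw (x # w)) v"

definition Delta :: "nat \<Rightarrow> nat \<Rightarrow> nat \<Rightarrow> nat \<Rightarrow> int" where
  "Delta q r s j = (if (q - 1) dvd j
     then (-1) ^ (r - 1) * int ((j - 1) choose (r - 1)) + (-1) ^ (s - 1) * int ((j - 1) choose (s - 1))
     else 0)"

definition dsumD :: "nat \<Rightarrow> nat \<Rightarrow> 'k::{finite,field} \<Rightarrow> (nat \<Rightarrow> 'k dvec) \<Rightarrow> 'k dvec" where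
  "dsumD a b g F = (\<Sum>j\<in>{1..<a+b}.
      smul (of_int (Delta (card (UNIV :: 'k set)) a b j)) (prefix (a + b - j, g) (F j)))"

definition dsumC :: "nat \<Rightarrow> nat \<Rightarrow> (nat \<Rightarrow> 'k::{finite,field} cvec) \<Rightarrow> 'k cvec" where
  "dsumC a b F = (\<Sum>j\<in>{1..<a+b}.
      smul (of_int (Delta (card (UNIV :: 'k set)) a b j)) (prefix (a + b - j) (F j)))"

text \<open>lsD j w = x_{j,1} shuffle w (the shuffle with a one-letter word of character 1),
  obtained by unfolding the defining recursion for a one-letter first argument.\<close>
fun lsD :: "nat \<Rightarrow> 'k::{finite,field} gword \<Rightarrow> 'k dvec" where
  "lsD j [] = bw [(j, 1)]"
| "lsD j ((b, \<beta>) # w) =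
     bw ((j, 1) # (b, \<beta>) # w) + prefix (b, \<beta>) (lsD j w)
     + (bw ((j + b, \<beta>) # w) + dsumD j b \<beta> (\<lambda>k. lsD k w))"

fun lsC :: "nat \<Rightarrow> nat list \<Rightarrow> 'k::{finite,field} cvec" where
  "lsC j [] = bw [j]"
| "lsC j (b # w) =
     bw (j # b # w) + prefix b (lsC j w)
     + (bw ((j + b) # w) + dsumC j b (\<lambda>k. lsC k w))"

function (sequential) diaD :: "'k::{finite,field} gword \<Rightarrow> 'k gword \<Rightarrow> 'k dvec"
  and shD :: "'k::{finite,field} gword \<Rightarrow> 'k gword \<Rightarrow> 'k dvec" where
  "diaD [] v = bw v"
| "diaD u [] = bw u"
| "diaD ((a, \<alpha>) # u) ((b, \<beta>) # v) =
     (let s = shD u v in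
      prefix (a + b, \<alpha> * \<beta>) s + dsumD a b (\<alpha> * \<beta>) (\<lambda>j. linext (lsD j) s))"
| "shD [] v = bw v"
| "shD u [] = bw u"
| "shD ((a, \<alpha>) # u) ((b, \<beta>) # v) =
     prefix (a, \<alpha>) (shD u ((b, \<beta>) # v)) + prefix (b, \<beta>) (shD ((a, \<alpha>) # u) v)
     + diaD ((a, \<alpha>) # u) ((b, \<beta>) # v)"
  by pat_completeness auto
termination
  by (relation "measure (\<lambda>x. case x of Inl (u, v) \<Rightarrow> 2 * (length u + length v)
                                   | Inr (u, v) \<Rightarrow> 2 * (length u + length v) + 1)") auto

function (sequential) diaC :: "nat list \<Rightarrow> nat list \<Rightarrow> 'k::{finite,field} cvec"
  and shC :: "nat list \<Rightarrow> nat list \<Rightarrow> 'k::{finite,field} cvec" where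
  "diaC [] v = bw v"
| "diaC u [] = bw u"
| "diaC (a # u) (b # v) =
     (let s = shC u v in
      prefix (a + b) s + dsumC a b (\<lambda>j. linext (lsC j) s))"
| "shC [] v = bw v"
| "shC u [] = bw u"
| "shC (a # u) (b # v) =
     prefix a (shC u (b # v)) + prefix b (shC (a # u) v) + diaC (a # u) (b # v)"
  by pat_completeness auto
termination
  by (relation "measure (\<lambda>x. case x of Inl (u, v) \<Rightarrow> 2 * (length u + length v)
                                   | Inr (u, v) \<Rightarrow> 2 * (length u + length v) + 1)") auto

fun phiC :: "'k::field \<Rightarrow> nat list \<Rightarrow> 'k gword" where
  "phiC \<alpha> [] = []"
| "phiC \<alpha> (i # w) = (i, \<alpha>) # map (\<lambda>n. (n, 1)) w"

fun phiD :: "'k::field \<Rightarrow> 'k gword \<Rightarrow> 'k gword" where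
  "phiD \<alpha> [] = []"
| "phiD \<alpha> ((u, \<epsilon>) # w) = (u, \<alpha> * \<epsilon>) # w"

definition phiDv :: "'k::field \<Rightarrow> 'k dvec \<Rightarrow> 'k dvec" where
  "phiDv \<alpha> v = linext (\<lambda>w. bw (phiD \<alpha> w)) v"

definition phiCv :: "'k::field \<Rightarrow> 'k cvec \<Rightarrow> 'k dvec" where
  "phiCv \<alpha> v = linext (\<lambda>w. bw (phiC \<alpha> w)) v"

end

theory Submission imports Defs begin

text \<open>The maps \<open>\<phi>\<^sub>\<alpha>\<close> change only the character of the first letter, and the diamond of two
  nonempty words depends on their first characters only through their product, which is the
  character of the first letter of every term. So \<open>\<phi>\<^sub>\<alpha>\<close>, \<open>\<phi>\<^sub>\<beta>\<close> applied to the arguments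
  amount to \<open>\<phi>\<^sub>\<alpha>\<^sub>\<beta>\<close> applied to the result. The statement on \<open>\<langle>\<Sigma>\<rangle>\<close> reduces to the one on
  \<open>\<langle>\<Gamma>\<rangle>\<close>, since giving every letter character 1 is compatible with diamond and shuffle.\<close>

lemma lookup_smul [simp]: "Poly_Mapping.lookup (smul c v) w = c * Poly_Mapping.lookup v w"
  unfolding smul_def by (simp add: Poly_Mapping.map.rep_eq when_def)

lemma keys_smul: "Poly_Mapping.keys (smul c v) \<subseteq> Poly_Mapping.keys v"
  by (auto simp: in_keys_iff)

lemma smul_zero [simp]: "smul c 0 = 0"
  by (rule poly_mapping_eqI) simp

lemma smul_zero_left [simp]: "smul 0 v = 0"
  by (rule poly_mapping_eqI) simp

lemma smul_one [simp]: "smul 1 v = v"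
  by (rule poly_mapping_eqI) simp

lemma smul_add: "smul c (v + w) = smul c v + smul c w"
  by (rule poly_mapping_eqI) (simp add: lookup_add algebra_simps)

lemma smul_add_left: "smul (c + d) v = smul c v + smul d v"
  by (rule poly_mapping_eqI) (simp add: lookup_add algebra_simps)

lemma smul_smul: "smul c (smul d v) = smul (c * d) v"
  by (rule poly_mapping_eqI) (simp add: algebra_simps)

lemma smul_sum: "smul c (sum f S) = (\<Sum>x\<in>S. smul c (f x))"
  by (induction S rule: infinite_finite_induct) (auto simp: smul_add)

lemma linext_superset:
  assumes "finite S" "Poly_Mapping.keys v \<subseteq> S"
  shows "linext f v = (\<Sum>w\<in>S. smul (Poly_Mapping.lookup v w) (f w))"
  unfolding linext_def
  by (rule sum.mono_neutral_left) (use assms in \<open>auto simp: in_keys_iff\<close>)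

lemma linext_zero [simp]: "linext f 0 = 0"
  by (simp add: linext_def)

lemma linext_bw [simp]: "linext f (bw w) = f w"
  by (simp add: linext_def bw_def)

lemma linext_add: "linext f (v + w) = linext f v + linext f w"
proof -
  let ?S = "Poly_Mapping.keys v \<union> Poly_Mapping.keys w"
  have "linext f (v + w) = (\<Sum>x\<in>?S. smul (Poly_Mapping.lookup (v + w) x) (f x))"
    by (rule linext_superset) (use keys_add[of v w] in auto)
  also have "\<dots> = (\<Sum>x\<in>?S. smul (Poly_Mapping.lookup v x) (f x))
                 + (\<Sum>x\<in>?S. smul (Poly_Mapping.lookup w x) (f x))"
    by (simp add: lookup_add smul_add_left sum.distrib)
  also have "\<dots> = linext f v + linext f w"
    by (subst (1 2) linext_superset[symmetric]) auto
  finally show ?thesis .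
qed

lemma linext_smul: "linext f (smul c v) = smul c (linext f v)"
proof -
  have "linext f (smul c v)
        = (\<Sum>x\<in>Poly_Mapping.keys v. smul (Poly_Mapping.lookup (smul c v) x) (f x))"
    by (rule linext_superset) (auto simp: keys_smul)
  then show ?thesis
    by (simp add: linext_def smul_sum smul_smul)
qed

lemma linext_sum: "linext f (sum g S) = (\<Sum>x\<in>S. linext f (g x))"
  by (induction S rule: infinite_finite_induct) (auto simp: linext_add)

lemma linext_linext: "linext f (linext g v) = linext (\<lambda>w. linext f (g w)) v"
  by (simp only: linext_def[of g v] linext_def[of "\<lambda>w. linext f (g w)" v] linext_sum linext_smul)

lemma phiDv_add: "phiDv c (v + w) = phiDv c v + phiDv c w"
  by (simp add: phiDv_def linext_add)

lemma phiDv_prefix: "phiDv c (prefix (n, \<epsilon>) v) = prefix (n, c * \<epsilon>) v"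
  by (simp add: phiDv_def prefix_def linext_linext)

lemma phiDv_dsumD: "phiDv c (dsumD a b \<epsilon> F) = dsumD a b (c * \<epsilon>) F"
  by (simp add: dsumD_def phiDv_def linext_sum linext_smul prefix_def linext_linext)

lemma phiDv_diaD_Cons:
  assumes "\<alpha>' * \<beta>' = c * (\<alpha> * \<beta>)"
  shows "phiDv c (diaD ((a, \<alpha>) # u) ((b, \<beta>) # v)) = diaD ((a, \<alpha>') # u) ((b, \<beta>') # v)"
  using assms by (simp add: Let_def phiDv_add phiDv_prefix phiDv_dsumD)

lemma diaD_phiD:
  assumes "u \<noteq> []" "v \<noteq> []"
  shows "diaD (phiD \<alpha> u) (phiD \<beta> v) = phiDv (\<alpha> * \<beta>) (diaD u v)"
proof -
  obtain a \<epsilon> u' b \<delta> v' where "u = (a, \<epsilon>) # u'" "v = (b, \<delta>) # v'"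
    using assms by (metis list.exhaust prod.exhaust)
  then show ?thesis
    by (simp only: phiD.simps) (rule phiDv_diaD_Cons[symmetric], simp add: mult_ac)
qed

abbreviation lift_word :: "nat list \<Rightarrow> 'k::field gword" where
  "lift_word w \<equiv> map (\<lambda>n. (n, 1)) w"

definition liftv :: "'k::field cvec \<Rightarrow> 'k dvec" where
  "liftv v = linext (\<lambda>w. bw (lift_word w)) v"

lemma liftv_bw [simp]: "liftv (bw w) = bw (lift_word w)"
  by (simp add: liftv_def)

lemma liftv_add: "liftv (v + w) = liftv v + liftv w"
  by (simp add: liftv_def linext_add)

lemma liftv_prefix: "liftv (prefix n v) = prefix (n, 1) (liftv v)"
  by (simp add: liftv_def prefix_def linext_linext)

lemma liftv_dsumC: "liftv (dsumC a b F) = dsumD a b 1 (\<lambda>j. liftv (F j))"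
  by (simp add: dsumC_def dsumD_def liftv_def linext_sum linext_smul
      liftv_prefix[unfolded liftv_def])

lemma lsD_lift_word: "lsD j (lift_word w) = liftv (lsC j w)"
  by (induction w arbitrary: j) (simp_all add: liftv_add liftv_prefix liftv_dsumC)

lemma linext_lsD_liftv: "linext (lsD j) (liftv v) = liftv (linext (lsC j) v)"
  by (simp add: liftv_def linext_linext lsD_lift_word[unfolded liftv_def])

lemma diaD_shD_lift_word:
  "diaD (lift_word u) (lift_word v) = (liftv (diaC u v) :: 'k::{finite,field} dvec)"
  "shD (lift_word u) (lift_word v) = (liftv (shC u v) :: 'k::{finite,field} dvec)"
proof (induction u v rule: diaC_shC.induct)
  case (3 a u b v)
  then show ?case
    by (simp add: Let_def liftv_add liftv_prefix liftv_dsumC linext_lsD_liftv)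
next
  case (6 a u b v)
  then show ?case
    by (simp add: liftv_add liftv_prefix)
qed simp_all

lemma phiC_eq_phiD_lift_word: "phiC c w = phiD c (lift_word w)"
  by (cases w) simp_all

lemma phiCv_eq_phiDv_liftv: "phiCv c v = phiDv c (liftv v)"
  by (simp add: phiCv_def phiDv_def liftv_def linext_linext phiC_eq_phiD_lift_word)

lemma diaD_phiC:
  assumes "u \<noteq> []" "v \<noteq> []"
  shows "diaD (phiC \<alpha> u) (phiC \<beta> v) = phiCv (\<alpha> * \<beta>) (diaC u v)"
  using assms
  by (simp add: phiC_eq_phiD_lift_word diaD_phiD diaD_shD_lift_word phiCv_eq_phiDv_liftv)

theorem lemma5p4:
  fixes \<alpha> \<beta> :: "'k::{finite,field}"
  assumes "\<alpha> \<noteq> 0" and "\<beta> \<noteq> 0"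
  shows "(\<forall>a b :: nat list. a \<noteq> [] \<longrightarrow> b \<noteq> [] \<longrightarrow> (\<forall>n\<in>set a. n > 0) \<longrightarrow> (\<forall>n\<in>set b. n > 0) \<longrightarrow>
            diaD (phiC \<alpha> a) (phiC \<beta> b) = phiCv (\<alpha> * \<beta>) (diaC a b))
       \<and> (\<forall>a b :: 'k gword. a \<noteq> [] \<longrightarrow> b \<noteq> [] \<longrightarrow>
            (\<forall>(n, e)\<in>set a. n > 0 \<and> e \<noteq> 0) \<longrightarrow> (\<forall>(n, e)\<in>set b. n > 0 \<and> e \<noteq> 0) \<longrightarrow>
            diaD (phiD \<alpha> a) (phiD \<beta> b) = phiDv (\<alpha> * \<beta>) (diaD a b))"
  by (simp add: diaD_phiC diaD_phiD)

end
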